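(* Let $p$ be a positive stochastic choice function on a finite set $X$ satisfying: for any $A\in\mathscr{A}$, $a,b\in A$ and $x\notin A$ with $a\sim_p x$ and $b\sim_p x$, one has $\frac{p(a,A)}{p(b,A)}=\frac{p(a,A\cup x)}{p(b,A\cup x)}$. Then the relation $\sim_p$ is transitive (hence, being reflexive and symmetric, an equivalence relation on $X$).
   Context: $X$ is a finite set and $\mathscr{A}$ the collection of nonempty subsets of $X$. A stochastic choice function is $p:X\times\mathscr{A}\to[0,1]$ with $\sum_{a\in A}p(a,A)=1$ and $p(x,A)=0$ for $x\notin A$; $p$ is positive: $p(a,A)>0$ for $a\in A$. $A\cup x$ denotes $A\cup\{x\}$. $a\sim_p b$ means: $\frac{p(a,A)}{p(b,A)}=\frac{p(a,\{a,b\})}{p(b,\{a,b\})}$ for every $A\in\mathscr{A}$ with $a,b\in A$. *)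

theory Defs
  imports Complex_Main
begin

definition menus :: "'a set \<Rightarrow> 'a set set" where
  "menus X = {A. A \<subseteq> X \<and> A \<noteq> {}}"

definition stoch_choice :: "'a set \<Rightarrow> ('a \<Rightarrow> 'a set \<Rightarrow> real) \<Rightarrow> bool" where
  "stoch_choice X p \<longleftrightarrow>
     (\<forall>A\<in>menus X. (\<forall>x. 0 \<le> p x A \<and> p x A \<le> 1) \<and> (\<Sum>a\<in>A. p a A) = 1
        \<and> (\<forall>x. x \<notin> A \<longrightarrow> p x A = 0))"

definition positive_sc :: "'a set \<Rightarrow> ('a \<Rightarrow> 'a set \<Rightarrow> real) \<Rightarrow> bool" where
  "positive_sc X p \<longleftrightarrow> (\<forall>A\<in>menus X. \<forall>a\<in>A. p a A > 0)"

definition sim_p :: "'a set \<Rightarrow> ('a \<Rightarrow> 'a set \<Rightarrow> real) \<Rightarrow> 'a \<Rightarrow> 'a \<Rightarrow> bool" where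
  "sim_p X p a b \<longleftrightarrow>
     (\<forall>A\<in>menus X. a \<in> A \<and> b \<in> A \<longrightarrow> p a A / p b A = p a {a, b} / p b {a, b})"

end

theory Submission
  imports Defs
begin

text \<open>If \<open>a \<sim> b\<close> and \<open>b \<sim> c\<close>, the ratio \<open>p(a,A)/p(c,A)\<close> factors through \<open>b\<close> and is therefore the
  same on every menu containing \<open>a\<close>, \<open>b\<close> and \<open>c\<close>. On a menu containing \<open>a\<close> and \<open>c\<close> but not \<open>b\<close>,
  the hypothesis (applied with \<open>x = b\<close>, using \<open>a \<sim> b\<close> and \<open>c \<sim> b\<close>) says that adding \<open>b\<close> does not
  change the ratio. So the ratio is the same on all menus containing \<open>a\<close> and \<open>c\<close>, which is \<open>a \<sim> c\<close>.\<close>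

lemma sim_p_ratio:
  "sim_p X p a b \<Longrightarrow> A \<in> menus X \<Longrightarrow> a \<in> A \<Longrightarrow> b \<in> A \<Longrightarrow>
   p a A / p b A = p a {a, b} / p b {a, b}"
  unfolding sim_p_def by blast

lemma sim_p_sym:
  assumes "sim_p X p a b"
  shows "sim_p X p b a"
  unfolding sim_p_def
proof (intro ballI impI)
  fix A assume "A \<in> menus X" and "b \<in> A \<and> a \<in> A"
  then have "inverse (p a A / p b A) = inverse (p a {a, b} / p b {a, b})"
    using sim_p_ratio[OF assms, of A] by simp
  then show "p b A / p a A = p b {b, a} / p a {b, a}"
    by (simp add: insert_commute)
qed

lemma sim_p_if_constant_ratio:
  assumes "a \<in> X" "b \<in> X"
    and r: "\<And>A. A \<in> menus X \<Longrightarrow> a \<in> A \<Longrightarrow> b \<in> A \<Longrightarrow> p a A / p b A = r"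
  shows "sim_p X p a b"
proof -
  have "{a, b} \<in> menus X"
    using assms(1,2) unfolding menus_def by auto
  then have "p a {a, b} / p b {a, b} = r"
    by (rule r) simp_all
  then show ?thesis
    unfolding sim_p_def using r by metis
qed

lemma ratio_through_middle:
  assumes "positive_sc X p" and "sim_p X p a b" and "sim_p X p b c"
    and A: "A \<in> menus X" "a \<in> A" "b \<in> A" "c \<in> A"
  shows "p a A / p c A = (p a {a, b} / p b {a, b}) * (p b {b, c} / p c {b, c})"
proof -
  have "p b A > 0"
    using assms(1) A unfolding positive_sc_def by blast
  then have "p a A / p c A = (p a A / p b A) * (p b A / p c A)"
    by simp
  also have "\<dots> = (p a {a, b} / p b {a, b}) * (p b {b, c} / p c {b, c})"
    using sim_p_ratio[OF assms(2) A(1-3)] sim_p_ratio[OF assms(3) A(1,3,4)] by simp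
  finally show ?thesis .
qed

theorem mainTheorem2:
  fixes X :: "'a set" and p :: "'a \<Rightarrow> 'a set \<Rightarrow> real"
  assumes "finite X"
    and "stoch_choice X p"
    and "positive_sc X p"
    and "\<And>A a b x. A \<in> menus X \<Longrightarrow> a \<in> A \<Longrightarrow> b \<in> A \<Longrightarrow> x \<in> X \<Longrightarrow> x \<notin> A \<Longrightarrow>
           sim_p X p a x \<Longrightarrow> sim_p X p b x \<Longrightarrow>
           p a A / p b A = p a (insert x A) / p b (insert x A)"
  shows "\<forall>a\<in>X. \<forall>b\<in>X. \<forall>c\<in>X. sim_p X p a b \<longrightarrow> sim_p X p b c \<longrightarrow> sim_p X p a c"
proof (intro ballI impI)
  fix a b c assume "a \<in> X" "b \<in> X" "c \<in> X" and ab: "sim_p X p a b" and bc: "sim_p X p b c"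
  define r where "r = (p a {a, b} / p b {a, b}) * (p b {b, c} / p c {b, c})"
  have "p a A / p c A = r" if A: "A \<in> menus X" "a \<in> A" "c \<in> A" for A
  proof (cases "b \<in> A")
    case True
    then show ?thesis
      unfolding r_def using ratio_through_middle[OF assms(3) ab bc] A by blast
  next
    case False
    have "insert b A \<in> menus X"
      using A \<open>b \<in> X\<close> unfolding menus_def by auto
    then have "p a (insert b A) / p c (insert b A) = r"
      unfolding r_def using ratio_through_middle[OF assms(3) ab bc] A by blast
    then show ?thesis
      using assms(4)[OF A \<open>b \<in> X\<close> False ab sim_p_sym[OF bc]] by simp
  qed
  then show "sim_p X p a c"
    by (rule sim_p_if_constant_ratio[OF \<open>a \<in> X\<close> \<open>c \<in> X\<close>])
qed

end
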